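(* If a topological space $X$ has a $\mathfrak{G}$-base at a point $x\in X$, then $X$ has a countable $cs^{\ast}$-network at $x$ (i.e. $X$ has countable $cs^{\ast}$-character at $x$). *)

theory Defs
  imports Complex_Main "HOL-Library.Countable_Set"
begin

definition nhd_of :: "'a::topological_space set \<Rightarrow> 'a \<Rightarrow> bool" where
  "nhd_of U x \<longleftrightarrow> (\<exists>V. open V \<and> x \<in> V \<and> V \<subseteq> U)"

definition G_base_at :: "((nat \<Rightarrow> nat) \<Rightarrow> 'a::topological_space set) \<Rightarrow> 'a \<Rightarrow> bool" where
  "G_base_at U x \<longleftrightarrow>
     (\<forall>\<alpha>. nhd_of (U \<alpha>) x) \<and>
     (\<forall>W. nhd_of W x \<longrightarrow> (\<exists>\<alpha>. U \<alpha> \<subseteq> W)) \<and>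
     (\<forall>\<alpha> \<beta>. (\<forall>n. \<alpha> n \<le> \<beta> n) \<longrightarrow> U \<beta> \<subseteq> U \<alpha>)"

definition has_G_base_at :: "'a::topological_space \<Rightarrow> bool" where
  "has_G_base_at x \<longleftrightarrow> (\<exists>U. G_base_at U x)"

definition cs_star_network_at :: "'a::topological_space set set \<Rightarrow> 'a \<Rightarrow> bool" where
  "cs_star_network_at \<N> x \<longleftrightarrow>
     (\<forall>s W. s \<longlonglongrightarrow> x \<longrightarrow> nhd_of W x \<longrightarrow>
        (\<exists>N\<in>\<N>. x \<in> N \<and> N \<subseteq> W \<and> infinite {n. s n \<in> N}))"

end

theory Submission
  imports Defs
begin

text \<open>Let \<open>U\<close> be a \<open>\<G>\<close>-base at \<open>x\<close> and, for a finite sequence \<open>l\<close>, let \<open>D l = G_cell U l\<close> be the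
  intersection of all \<open>U \<beta>\<close> with \<open>\<beta>\<close> extending \<open>l\<close>; these countably many sets form the
  network. Given a neighbourhood \<open>U \<alpha>\<close> and a sequence \<open>s \<longlonglongrightarrow> x\<close>, some \<open>D (\<alpha>|n)\<close> must
  contain infinitely many terms: otherwise for each \<open>n\<close> a late term \<open>s m\<^sub>n\<close> escapes some
  \<open>U \<beta>\<^sub>n\<close> with \<open>\<beta>\<^sub>n\<close> extending \<open>\<alpha>|n\<close>. Such \<open>\<beta>\<^sub>n\<close> are pointwise bounded by one \<open>\<gamma>\<close>, so
  \<open>U \<gamma>\<close> is a neighbourhood of \<open>x\<close> contained in every \<open>U \<beta>\<^sub>n\<close>, which the convergent
  sequence \<open>s m\<^sub>n\<close> cannot avoid.\<close>

definition G_cell :: "((nat \<Rightarrow> nat) \<Rightarrow> 'a set) \<Rightarrow> nat list \<Rightarrow> 'a set" where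
  "G_cell U l = \<Inter>{U \<beta> | \<beta>. \<forall>i<length l. \<beta> i = l ! i}"

lemma G_base_at_nhd: "G_base_at U x \<Longrightarrow> nhd_of (U \<alpha>) x"
  unfolding G_base_at_def by blast

lemma G_base_at_refines: "G_base_at U x \<Longrightarrow> nhd_of W x \<Longrightarrow> \<exists>\<alpha>. U \<alpha> \<subseteq> W"
  unfolding G_base_at_def by blast

lemma G_base_at_antimono: "G_base_at U x \<Longrightarrow> (\<And>n. \<alpha> n \<le> \<beta> n) \<Longrightarrow> U \<beta> \<subseteq> U \<alpha>"
  unfolding G_base_at_def by blast

lemma G_base_at_mem: "G_base_at U x \<Longrightarrow> x \<in> U \<alpha>"
  using G_base_at_nhd unfolding nhd_of_def by blast

lemma G_base_at_mem_G_cell: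
  assumes "G_base_at U x"
  shows "x \<in> G_cell U l"
  using G_base_at_mem[OF assms] unfolding G_cell_def by blast

lemma G_cell_prefix_subset: "G_cell U (map \<alpha> [0..<n]) \<subseteq> U \<alpha>"
  unfolding G_cell_def by auto

lemma dominated_if_eventually_agree:
  fixes \<alpha> :: "nat \<Rightarrow> nat" and \<beta> :: "nat \<Rightarrow> nat \<Rightarrow> nat"
  assumes "\<And>n i. i < n \<Longrightarrow> \<beta> n i = \<alpha> i"
  shows "\<exists>\<gamma>. \<forall>n k. \<beta> n k \<le> \<gamma> k"
proof (intro exI allI)
  fix n k
  show "\<beta> n k \<le> \<alpha> k + (\<Sum>j\<le>k. \<beta> j k)"
  proof (cases "k < n")
    case True
    then show ?thesis using assms by simp
  next
    case False
    then have "\<beta> n k \<le> (\<Sum>j\<le>k. \<beta> j k)"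
      by (intro member_le_sum) auto
    then show ?thesis by simp
  qed
qed

lemma G_cell_prefix_infinitely_often:
  assumes G: "G_base_at U x" and lim: "s \<longlonglongrightarrow> x"
  shows "\<exists>n. infinite {m. s m \<in> G_cell U (map \<alpha> [0..<n])}"
proof (rule ccontr)
  assume "\<not> ?thesis"
  then have fin: "finite {m. s m \<in> G_cell U (map \<alpha> [0..<n])}" for n
    by blast
  have "\<forall>n. \<exists>m \<beta>. m \<ge> n \<and> (\<forall>i<n. \<beta> i = \<alpha> i) \<and> s m \<notin> U \<beta>"
  proof
    fix n
    have "\<not> {n..} \<subseteq> {m. s m \<in> G_cell U (map \<alpha> [0..<n])}"
      using fin[of n] infinite_Ici[of n] finite_subset by blast
    then obtain m where "m \<ge> n" "s m \<notin> G_cell U (map \<alpha> [0..<n])"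
      by auto
    then show "\<exists>m \<beta>. m \<ge> n \<and> (\<forall>i<n. \<beta> i = \<alpha> i) \<and> s m \<notin> U \<beta>"
      unfolding G_cell_def by auto
  qed
  then obtain m \<beta> where
    "\<And>n. m n \<ge> n \<and> (\<forall>i<n. \<beta> n i = \<alpha> i) \<and> s (m n) \<notin> U (\<beta> n)"
    by metis
  then have m: "\<And>n. m n \<ge> n" and agree: "\<And>n i. i < n \<Longrightarrow> \<beta> n i = \<alpha> i"
    and escape: "\<And>n. s (m n) \<notin> U (\<beta> n)"
    by blast+
  obtain \<gamma> where \<gamma>: "\<And>n k. \<beta> n k \<le> \<gamma> k"
    using dominated_if_eventually_agree[of \<beta> \<alpha>, OF agree] by blast
  have "U \<gamma> \<subseteq> U (\<beta> n)" for n
    using G_base_at_antimono[OF G \<gamma>] .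
  moreover obtain V where "open V" "x \<in> V" "V \<subseteq> U \<gamma>"
    using G_base_at_nhd[OF G] unfolding nhd_of_def by blast
  moreover obtain M where "\<forall>k\<ge>M. s k \<in> V"
    using lim \<open>open V\<close> \<open>x \<in> V\<close> unfolding lim_explicit by blast
  ultimately show False
    using m[of M] escape[of M] by blast
qed

theorem proposition4p7:
  fixes x :: "'a::topological_space"
  assumes "has_G_base_at x"
  shows "\<exists>\<N>. countable \<N> \<and> cs_star_network_at \<N> x"
proof -
  obtain U where G: "G_base_at U x"
    using assms unfolding has_G_base_at_def by blast
  have "cs_star_network_at (range (G_cell U)) x"
    unfolding cs_star_network_at_def
  proof (intro allI impI)
    fix s W
    assume lim: "s \<longlonglongrightarrow> x" and "nhd_of W x"
    then obtain \<alpha> where "U \<alpha> \<subseteq> W"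
      using G_base_at_refines[OF G] by blast
    moreover obtain n where "infinite {m. s m \<in> G_cell U (map \<alpha> [0..<n])}"
      using G_cell_prefix_infinitely_often[OF G lim] by blast
    ultimately show "\<exists>N\<in>range (G_cell U). x \<in> N \<and> N \<subseteq> W \<and> infinite {n. s n \<in> N}"
      using G_base_at_mem_G_cell[OF G] G_cell_prefix_subset[of U \<alpha> n]
      by (intro bexI[of _ "G_cell U (map \<alpha> [0..<n])"]) auto
  qed
  then show ?thesis
    by (intro exI[of _ "range (G_cell U)"]) simp
qed

end
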